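(* Let $I$ be an instance and suppose $M\subseteq\mathrm{tent}(I)$ is safe with respect to $I$. Then every match in $M$ is finalizable in $I$.
   Context: An instance $I$ consists of finite disjoint sets $R$ (residents) and $H$ (hospitals), a positive integer quota $q_h$ for each $h\in H$, for each $r\in R$ a preference list of $r$ (a sequence of distinct members of $H$, not necessarily all), and for each $h\in H$ a preference list of $h$ (a sequence of distinct members of $R$). A list is complete if it contains every member of the opposite side; an instance is complete if all lists are complete. A match is a pair $(r,h)\in R\times H$. For a set $M$ of matches, $\mathrm{res}_h M=\{r:(r,h)\in M\}$, $\mathrm{res}\,M=\{r:(r,h)\in M\text{ for some }h\}$. $J$ is an extension of $I$ (same $R,H$, quotas) if every list of $J$ has the corresponding list of $I$ as a prefix; a complete extension is a completion. An event is $(r,h)^+$ (proposal) or $(r,h)^-$ (rejection). For an event sequence $\sigma$, $\mathrm{prop}(\sigma)$, $\mathrm{rej}(\sigma)$ are the sets of matches proposed/rejected in $\sigma$, $\mathrm{tent}(\sigma)=\mathrm{prop}(\sigma)\setminus\mathrm{rej}(\sigma)$, and $\mathrm{pend}_I(\sigma)$ is the set of $(r,h)\in\mathrm{tent}(\sigma)$ with $r$ not on the list of $h$ in $I$. A match $(r,h)\in M$ is ousted from $M$ in $I$ if the list of $h$ in $I$ contains at least $q_h$ residents of $\mathrm{res}_h M$ and either $r$ is not on it or $r$ is preceded on it by at least $q_h$ residents of $\mathrm{res}_h M$. $I$-feasible sequences: the empty sequence is $I$-feasible; if $\sigma$ is $I$-feasible then $\sigma+(r,h)^+$ is $I$-feasible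 if $r\notin\mathrm{res}\,\mathrm{tent}(\sigma)$, $(r,h)\notin\mathrm{prop}(\sigma)$, $h$ is on the list of $r$ in $I$ and $(r,h')\in\mathrm{rej}(\sigma)$ for every $h'$ preceding $h$ on it; and $\sigma+(r,h)^-$ is $I$-feasible if $(r,h)$ is ousted from $\mathrm{prop}(\sigma)$ in $I$ and $(r,h)\notin\mathrm{rej}(\sigma)$. All maximal $I$-feasible sequences contain the same events; $\mathrm{tent}(I),\mathrm{pend}(I)$ denote $\mathrm{tent}(\sigma),\mathrm{pend}_I(\sigma)$ for any maximal $I$-feasible $\sigma$. A match $(r,h)\in\mathrm{tent}(I)$ is finalizable in $I$ if $(r,h)\in\mathrm{tent}(J)$ for every completion $J$ of $I$. Let $M\subseteq\mathrm{tent}(I)$. A resident $r'$ is relevant to $h$ with respect to $M$ if $(r',h)\in M$ or $r'\notin\mathrm{res}\,M$. A match $(r,h)\in M$ is endangered in $M$ with respect to $I$ if: when $(r,h)\in\mathrm{tent}(I)\setminus\mathrm{pend}(I)$, the list of $h$ in $I$ contains at least $q_h$ residents preceding $r$ that are relevant to $h$ with respect to $M$; when $(r,h)\in\mathrm{pend}(I)$, the number of residents relevant to $h$ with respect to $M$ is at least $q_h+1$. $M$ is safe with respect to $I$ if no match of $M$ is endangered in $M$ with respect to $I$. *)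

theory Defs
  imports Main "HOL-Library.Sublist"
begin

text \<open>Instances of the hospitals/residents problem. Residents have type 'r, hospitals type 'h
  (so the two sets are automatically disjoint).\<close>

record ('r, 'h) hr_instance =
  Res   :: "'r set"
  Hos   :: "'h set"
  quota :: "'h \<Rightarrow> nat"
  rpref :: "'r \<Rightarrow> 'h list"
  hpref :: "'h \<Rightarrow> 'r list"

definition wf_instance :: "('r, 'h) hr_instance \<Rightarrow> bool" where
  "wf_instance I \<longleftrightarrow> finite (Res I) \<and> finite (Hos I)
     \<and> (\<forall>h\<in>Hos I. quota I h > 0)
     \<and> (\<forall>r\<in>Res I. distinct (rpref I r) \<and> set (rpref I r) \<subseteq> Hos I)
     \<and> (\<forall>h\<in>Hos I. distinct (hpref I h) \<and> set (hpref I h) \<subseteq> Res I)"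

definition complete_instance :: "('r, 'h) hr_instance \<Rightarrow> bool" where
  "complete_instance I \<longleftrightarrow> (\<forall>r\<in>Res I. set (rpref I r) = Hos I)
     \<and> (\<forall>h\<in>Hos I. set (hpref I h) = Res I)"

definition extension :: "('r, 'h) hr_instance \<Rightarrow> ('r, 'h) hr_instance \<Rightarrow> bool" where
  "extension J I \<longleftrightarrow> wf_instance J \<and> Res J = Res I \<and> Hos J = Hos I
     \<and> (\<forall>h\<in>Hos I. quota J h = quota I h)
     \<and> (\<forall>r\<in>Res I. prefix (rpref I r) (rpref J r))
     \<and> (\<forall>h\<in>Hos I. prefix (hpref I h) (hpref J h))"

definition completion :: "('r, 'h) hr_instance \<Rightarrow> ('r, 'h) hr_instance \<Rightarrow> bool" where
  "completion J I \<longleftrightarrow> extension J I \<and> complete_instance J"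

definition preceding :: "'a list \<Rightarrow> 'a \<Rightarrow> 'a set" where
  "preceding L x = set (takeWhile (\<lambda>y. y \<noteq> x) L)"

definition res_of :: "('r \<times> 'h) set \<Rightarrow> 'r set" where
  "res_of M = fst ` M"

definition res_at :: "'h \<Rightarrow> ('r \<times> 'h) set \<Rightarrow> 'r set" where
  "res_at h M = {r. (r, h) \<in> M}"

datatype ('r, 'h) event = Propose 'r 'h | Reject 'r 'h

definition props :: "('r, 'h) event list \<Rightarrow> ('r \<times> 'h) set" where
  "props \<sigma> = {(r, h). Propose r h \<in> set \<sigma>}"

definition rejs :: "('r, 'h) event list \<Rightarrow> ('r \<times> 'h) set" where
  "rejs \<sigma> = {(r, h). Reject r h \<in> set \<sigma>}"

definition tent_seq :: "('r, 'h) event list \<Rightarrow> ('r \<times> 'h) set" where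
  "tent_seq \<sigma> = props \<sigma> - rejs \<sigma>"

definition pend_seq :: "('r, 'h) hr_instance \<Rightarrow> ('r, 'h) event list \<Rightarrow> ('r \<times> 'h) set" where
  "pend_seq I \<sigma> = {(r, h) \<in> tent_seq \<sigma>. r \<notin> set (hpref I h)}"

definition ousted :: "('r, 'h) hr_instance \<Rightarrow> ('r \<times> 'h) set \<Rightarrow> 'r \<Rightarrow> 'h \<Rightarrow> bool" where
  "ousted I M r h \<longleftrightarrow> (r, h) \<in> M
     \<and> card (set (hpref I h) \<inter> res_at h M) \<ge> quota I h
     \<and> (r \<notin> set (hpref I h) \<or> card (preceding (hpref I h) r \<inter> res_at h M) \<ge> quota I h)"

inductive feasible :: "('r, 'h) hr_instance \<Rightarrow> ('r, 'h) event list \<Rightarrow> bool" for I where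
  feasible_Nil: "feasible I []"
| feasible_Propose: "\<lbrakk> feasible I \<sigma>; r \<in> Res I; r \<notin> res_of (tent_seq \<sigma>); (r, h) \<notin> props \<sigma>;
      h \<in> set (rpref I r); \<forall>h' \<in> preceding (rpref I r) h. (r, h') \<in> rejs \<sigma> \<rbrakk>
    \<Longrightarrow> feasible I (\<sigma> @ [Propose r h])"
| feasible_Reject: "\<lbrakk> feasible I \<sigma>; ousted I (props \<sigma>) r h; (r, h) \<notin> rejs \<sigma> \<rbrakk>
    \<Longrightarrow> feasible I (\<sigma> @ [Reject r h])"

definition maximal_feasible :: "('r, 'h) hr_instance \<Rightarrow> ('r, 'h) event list \<Rightarrow> bool" where
  "maximal_feasible I \<sigma> \<longleftrightarrow> feasible I \<sigma> \<and> (\<nexists>e. feasible I (\<sigma> @ [e]))"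

text \<open>tent(I), pend(I): computed from (any) maximal I-feasible sequence.\<close>
definition tent :: "('r, 'h) hr_instance \<Rightarrow> ('r \<times> 'h) set" where
  "tent I = tent_seq (SOME \<sigma>. maximal_feasible I \<sigma>)"

definition pend :: "('r, 'h) hr_instance \<Rightarrow> ('r \<times> 'h) set" where
  "pend I = pend_seq I (SOME \<sigma>. maximal_feasible I \<sigma>)"

definition finalizable :: "('r, 'h) hr_instance \<Rightarrow> 'r \<times> 'h \<Rightarrow> bool" where
  "finalizable I m \<longleftrightarrow> m \<in> tent I \<and> (\<forall>J. completion J I \<longrightarrow> m \<in> tent J)"

definition relevant :: "('r \<times> 'h) set \<Rightarrow> 'h \<Rightarrow> 'r \<Rightarrow> bool" where
  "relevant M h r' \<longleftrightarrow> (r', h) \<in> M \<or> r' \<notin> res_of M"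

definition endangered :: "('r, 'h) hr_instance \<Rightarrow> ('r \<times> 'h) set \<Rightarrow> 'r \<times> 'h \<Rightarrow> bool" where
  "endangered I M m \<longleftrightarrow> m \<in> M \<and> (case m of (r, h) \<Rightarrow>
     (m \<in> tent I - pend I \<longrightarrow>
        card {r' \<in> preceding (hpref I h) r. relevant M h r'} \<ge> quota I h)
   \<and> (m \<in> pend I \<longrightarrow>
        card {r' \<in> Res I. relevant M h r'} \<ge> quota I h + 1))"

definition safe :: "('r, 'h) hr_instance \<Rightarrow> ('r \<times> 'h) set \<Rightarrow> bool" where
  "safe I M \<longleftrightarrow> M \<subseteq> tent I \<and> (\<forall>m\<in>M. \<not> endangered I M m)"

end

theory Submission
  imports Defs
begin

text \<open>Let \<sigma> be a maximal I-feasible sequence and J a completion of I. Every I-feasible sequence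
  is J-feasible, and every J-feasible sequence only uses events of a maximal one, so \<sigma>'s
  proposals reappear in every maximal J-feasible sequence. It remains to see that no match
  (r, h) of a safe M is ever rejected in J. If it were ousted, the residents crowding r out at h
  would all be relevant to h: a resident r' proposing to h in J while holding a match
  (r', h'') of M must have been rejected by h in I already, and then h would have ousted r in I
  too, contradicting the maximality of \<sigma>. Counting these relevant residents makes (r, h)
  endangered, contradicting safety.\<close>

lemma props_snoc [simp]:
  "props (s @ [Propose r h]) = insert (r, h) (props s)"
  "props (s @ [Reject r h]) = props s"
  by (auto simp: props_def)

lemma rejs_snoc [simp]:
  "rejs (s @ [Propose r h]) = rejs s"
  "rejs (s @ [Reject r h]) = insert (r, h) (rejs s)"
  by (auto simp: rejs_def)

lemma props_mono: "set s \<subseteq> set t \<Longrightarrow> props s \<subseteq> props t"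
  by (auto simp: props_def)

lemma rejs_mono: "set s \<subseteq> set t \<Longrightarrow> rejs s \<subseteq> rejs t"
  by (auto simp: rejs_def)

lemma preceding_subset: "preceding L x \<subseteq> set L"
  by (auto simp: preceding_def dest: set_takeWhileD)

lemma finite_preceding [simp]: "finite (preceding L x)"
  by (rule finite_subset[OF preceding_subset]) simp

lemma not_in_preceding: "x \<notin> preceding L x"
  by (auto simp: preceding_def dest: set_takeWhileD)

lemma preceding_prefix:
  assumes "prefix L L'" "x \<in> set L"
  shows "preceding L' x = preceding L x"
  using assms by (auto simp: prefix_def preceding_def)

lemma set_subset_preceding_prefix:
  assumes "prefix L L'" "x \<notin> set L"
  shows "set L \<subseteq> preceding L' x"
  using assms by (auto simp: prefix_def preceding_def takeWhile_append)

lemma preceding_trans: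
  assumes "y \<in> preceding L x"
  shows "preceding L y \<subseteq> preceding L x"
proof -
  let ?tw = "takeWhile (\<lambda>z. z \<noteq> x) L"
  have "y \<in> set ?tw" using assms by (simp add: preceding_def)
  then have "takeWhile (\<lambda>z. z \<noteq> y) (?tw @ dropWhile (\<lambda>z. z \<noteq> x) L)
      = takeWhile (\<lambda>z. z \<noteq> y) ?tw"
    by (rule takeWhile_append1) simp
  then show ?thesis by (auto simp: preceding_def dest: set_takeWhileD)
qed

lemma preceding_total:
  assumes "distinct L" "a \<in> set L" "b \<in> set L" "a \<noteq> b" "b \<notin> preceding L a"
  shows "a \<in> preceding L b"
  using assms by (induction L) (auto simp: preceding_def)

lemma ousted_mono:
  assumes "ousted I A r h" "A \<subseteq> B"
  shows "ousted I B r h"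
proof -
  have "res_at h A \<subseteq> res_at h B" using assms(2) by (auto simp: res_at_def)
  then have "card (set (hpref I h) \<inter> res_at h A) \<le> card (set (hpref I h) \<inter> res_at h B)"
    and "card (preceding (hpref I h) r \<inter> res_at h A) \<le> card (preceding (hpref I h) r \<inter> res_at h B)"
    by (auto intro: card_mono)
  then show ?thesis using assms unfolding ousted_def by auto
qed

lemma ousted_by_predecessor:
  assumes "ousted I A r' h" "(r, h) \<in> A"
    and "r \<notin> set (hpref I h) \<or> r' \<in> preceding (hpref I h) r"
  shows "ousted I A r h"
proof (cases "r \<in> set (hpref I h)")
  case True
  then have r': "r' \<in> preceding (hpref I h) r" using assms(3) by blast
  then have "card (preceding (hpref I h) r' \<inter> res_at h A) \<ge> quota I h"
    using assms(1) preceding_subset by (fastforce simp: ousted_def)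
  also have "card (preceding (hpref I h) r' \<inter> res_at h A) \<le> card (preceding (hpref I h) r \<inter> res_at h A)"
    using preceding_trans[OF r'] by (auto intro: card_mono)
  finally show ?thesis using assms(1,2) by (auto simp: ousted_def)
qed (use assms in \<open>auto simp: ousted_def\<close>)

lemma ousted_extension:
  assumes ext: "extension J I" and h: "h \<in> Hos I" and o: "ousted I A r h"
  shows "ousted J A r h"
proof -
  have q: "quota J h = quota I h" and pf: "prefix (hpref I h) (hpref J h)"
    using ext h by (auto simp: extension_def)
  have "card (set (hpref I h) \<inter> res_at h A) \<le> card (set (hpref J h) \<inter> res_at h A)"
    using set_mono_prefix[OF pf] by (auto intro: card_mono)
  moreover have "r \<notin> set (hpref J h) \<or> card (preceding (hpref J h) r \<inter> res_at h A) \<ge> quota J h"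
  proof (cases "r \<in> set (hpref I h)")
    case True
    then show ?thesis using o q preceding_prefix[OF pf True] by (auto simp: ousted_def)
  next
    case False
    have "card (set (hpref I h) \<inter> res_at h A) \<le> card (preceding (hpref J h) r \<inter> res_at h A)"
      using set_subset_preceding_prefix[OF pf False] by (auto intro: card_mono)
    then show ?thesis using o q by (auto simp: ousted_def)
  qed
  ultimately show ?thesis using o q unfolding ousted_def by linarith
qed

subsection \<open>Invariants of feasible sequences\<close>

lemma feasible_proposal:
  assumes "feasible I s" "(r, h) \<in> props s"
  shows "r \<in> Res I \<and> h \<in> set (rpref I r) \<and> (\<forall>h'\<in>preceding (rpref I r) h. (r, h') \<in> rejs s)"
  using assms by (induction rule: feasible.induct) (auto simp: props_def)

lemma feasible_props_subset:
  assumes "wf_instance I" "feasible I s"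
  shows "props s \<subseteq> Res I \<times> Hos I"
  using assms feasible_proposal by (fastforce simp: wf_instance_def)

lemma feasible_rejection:
  assumes "feasible I s" "(r, h) \<in> rejs s"
  shows "ousted I (props s) r h"
  using assms by (induction rule: feasible.induct) (auto simp: rejs_def intro: ousted_mono)

lemma rejs_subset_props: "feasible I s \<Longrightarrow> rejs s \<subseteq> props s"
  using feasible_rejection by (fastforce simp: ousted_def)

lemma feasible_distinct: "feasible I s \<Longrightarrow> distinct s"
  by (induction rule: feasible.induct) (auto simp: props_def rejs_def)

lemma proposal_precedes_unrejected:
  assumes wf: "wf_instance I" and s: "feasible I s"
    and "(r, h) \<in> props s" "(r, h') \<notin> rejs s" "h' \<in> set (rpref I r)" "h' \<noteq> h"
  shows "h \<in> preceding (rpref I r) h'"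
proof (rule preceding_total)
  from feasible_proposal[OF s assms(3)]
  have "r \<in> Res I" "h \<in> set (rpref I r)" "\<forall>h''\<in>preceding (rpref I r) h. (r, h'') \<in> rejs s"
    by auto
  then show "distinct (rpref I r)" "h \<in> set (rpref I r)" "h' \<notin> preceding (rpref I r) h"
    using wf assms(4) by (auto simp: wf_instance_def)
qed (use assms in auto)

subsection \<open>Maximal feasible sequences\<close>

lemma maximal_feasible_exists:
  assumes "wf_instance I"
  shows "\<exists>s. maximal_feasible I s"
proof -
  define E where
    "E = (\<lambda>(r, h). Propose r h) ` (Res I \<times> Hos I) \<union> (\<lambda>(r, h). Reject r h) ` (Res I \<times> Hos I)"
  have "finite E" using assms by (auto simp: E_def wf_instance_def)
  have "length s \<le> card E" if s: "feasible I s" for s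
  proof -
    have P: "props s \<subseteq> Res I \<times> Hos I" and R: "rejs s \<subseteq> Res I \<times> Hos I"
      using feasible_props_subset[OF assms s] rejs_subset_props[OF s] by auto
    have "set s \<subseteq> E"
    proof
      fix e assume "e \<in> set s"
      with P R show "e \<in> E" by (cases e) (force simp: E_def props_def rejs_def)+
    qed
    then show ?thesis
      using card_mono[OF \<open>finite E\<close>] distinct_card[OF feasible_distinct[OF s]] by metis
  qed
  then obtain s where s: "feasible I s" "\<forall>t. feasible I t \<longrightarrow> length t \<le> length s"
    using ex_has_greatest_nat[of "feasible I" "[]" length "card E + 1"] feasible_Nil
    by (metis less_Suc_eq_le Suc_eq_plus1)
  then have "\<nexists>e. feasible I (s @ [e])" by fastforce
  with s show ?thesis by (auto simp: maximal_feasible_def)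
qed

lemma maximal_feasible_not_ousted:
  assumes "maximal_feasible I s" "(r, h) \<in> tent_seq s"
  shows "\<not> ousted I (props s) r h"
  using assms feasible_Reject[of I s r h] by (auto simp: maximal_feasible_def tent_seq_def)

lemma feasible_subset_maximal:
  assumes wf: "wf_instance I" and "feasible I t" and mx: "maximal_feasible I \<rho>"
  shows "set t \<subseteq> set \<rho>"
  using assms(2)
proof (induction rule: feasible.induct)
  case feasible_Nil
  then show ?case by simp
next
  case (feasible_Propose \<sigma> r h)
  have \<rho>: "feasible I \<rho>" "\<nexists>e. feasible I (\<rho> @ [e])"
    using mx by (auto simp: maximal_feasible_def)
  have "(r, h) \<in> props \<rho>"
  proof (rule ccontr)
    assume new: "(r, h) \<notin> props \<rho>"
    have "\<forall>h'\<in>preceding (rpref I r) h. (r, h') \<in> rejs \<rho>"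
      using feasible_Propose.hyps(6) rejs_mono[OF feasible_Propose.IH] by blast
    then have "r \<in> res_of (tent_seq \<rho>)"
      using feasible.feasible_Propose[OF \<rho>(1) feasible_Propose.hyps(2) _ new feasible_Propose.hyps(5)] \<rho>(2)
      by blast
    then obtain h'' where "(r, h'') \<in> props \<rho>" "(r, h'') \<notin> rejs \<rho>"
      by (auto simp: res_of_def tent_seq_def)
    moreover have "(r, h) \<notin> rejs \<rho>" using new rejs_subset_props[OF \<rho>(1)] by blast
    ultimately have "h'' \<in> preceding (rpref I r) h"
      using proposal_precedes_unrejected[OF wf \<rho>(1)] feasible_Propose.hyps(5) new by metis
    then have "(r, h'') \<in> rejs \<rho>"
      using feasible_Propose.hyps(6) rejs_mono[OF feasible_Propose.IH] by blast
    with \<open>(r, h'') \<notin> rejs \<rho>\<close> show False by contradiction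
  qed
  then show ?case using feasible_Propose.IH by (auto simp: props_def)
next
  case (feasible_Reject \<sigma> r h)
  have \<rho>: "feasible I \<rho>" "\<nexists>e. feasible I (\<rho> @ [e])"
    using mx by (auto simp: maximal_feasible_def)
  have "ousted I (props \<rho>) r h"
    using ousted_mono[OF feasible_Reject.hyps(2) props_mono[OF feasible_Reject.IH]] .
  then have "(r, h) \<in> rejs \<rho>" using feasible.feasible_Reject[OF \<rho>(1)] \<rho>(2) by blast
  then show ?case using feasible_Reject.IH by (auto simp: rejs_def)
qed

lemma maximal_feasible_same_events:
  assumes "wf_instance I" "maximal_feasible I \<sigma>" "maximal_feasible I \<rho>"
  shows "set \<sigma> = set \<rho>"
  using assms feasible_subset_maximal by (metis maximal_feasible_def subset_antisym)

lemma tent_eq_tent_seq: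
  assumes "wf_instance I" "maximal_feasible I \<sigma>"
  shows "tent I = tent_seq \<sigma>"
proof -
  have "maximal_feasible I (SOME s. maximal_feasible I s)"
    using maximal_feasible_exists[OF assms(1)] by (rule someI_ex)
  then show ?thesis
    using maximal_feasible_same_events[OF assms] 
    by (simp add: tent_def tent_seq_def props_def rejs_def)
qed

lemma pend_eq_pend_seq:
  assumes "wf_instance I" "maximal_feasible I \<sigma>"
  shows "pend I = pend_seq I \<sigma>"
proof -
  have "pend I = {(r, h) \<in> tent I. r \<notin> set (hpref I h)}"
    by (simp add: pend_def tent_def pend_seq_def)
  then show ?thesis using tent_eq_tent_seq[OF assms] by (simp add: pend_seq_def)
qed

subsection \<open>Extensions\<close>

lemma feasible_extension:
  assumes ext: "extension J I" and wf: "wf_instance I" and "feasible I s"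
  shows "feasible J s"
  using assms(3)
proof (induction rule: feasible.induct)
  case feasible_Nil
  then show ?case by (rule feasible.feasible_Nil)
next
  case (feasible_Propose \<sigma> r h)
  have pf: "prefix (rpref I r) (rpref J r)" and rJ: "r \<in> Res J"
    using ext feasible_Propose.hyps(2) by (auto simp: extension_def)
  have hJ: "h \<in> set (rpref J r)" using set_mono_prefix[OF pf] feasible_Propose.hyps(5) by blast
  have "\<forall>h'\<in>preceding (rpref J r) h. (r, h') \<in> rejs \<sigma>"
    using preceding_prefix[OF pf feasible_Propose.hyps(5)] feasible_Propose.hyps(6) by simp
  then show ?case
    by (rule feasible.feasible_Propose[OF feasible_Propose.IH rJ feasible_Propose.hyps(3,4) hJ])
next
  case (feasible_Reject \<sigma> r h)
  have "(r, h) \<in> props \<sigma>" using feasible_Reject.hyps(2) by (simp add: ousted_def)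
  then have "h \<in> Hos I" using feasible_props_subset[OF wf feasible_Reject.hyps(1)] by blast
  from ousted_extension[OF ext this feasible_Reject.hyps(2)] show ?case
    by (rule feasible.feasible_Reject[OF feasible_Reject.IH _ feasible_Reject.hyps(3)])
qed

subsection \<open>Safe matches in completions\<close>

text \<open>The I-rejection of r' at h below comes from the order in which r' proposes in J,
  and it transfers to r because r' precedes r at h.\<close>

lemma proposer_preceding_relevant:
  assumes wf: "wf_instance I" and mx: "maximal_feasible I \<sigma>" and M: "M \<subseteq> tent_seq \<sigma>"
    and ext: "extension J I" and \<tau>: "feasible J \<tau>" and unrej: "\<forall>m\<in>M. m \<notin> rejs \<tau>"
    and rh: "(r, h) \<in> tent_seq \<sigma>" and r': "r' \<in> preceding (hpref J h) r" "(r', h) \<in> props \<tau>"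
  shows "relevant M h r'"
proof (rule ccontr)
  assume "\<not> relevant M h r'"
  then obtain h'' where M'': "(r', h'') \<in> M" and "h'' \<noteq> h"
    unfolding relevant_def res_of_def by force
  have \<sigma>: "feasible I \<sigma>" using mx by (simp add: maximal_feasible_def)
  have wfJ: "wf_instance J" using ext by (simp add: extension_def)
  have rh_props: "(r, h) \<in> props \<sigma>" using rh by (simp add: tent_seq_def)
  have "(r', h'') \<in> props \<sigma>" using M'' M by (auto simp: tent_seq_def)
  from feasible_proposal[OF \<sigma> this] have r'R: "r' \<in> Res I" and h'': "h'' \<in> set (rpref I r')"
    and rejected: "\<forall>h'\<in>preceding (rpref I r') h''. (r', h') \<in> rejs \<sigma>" by auto
  have pf: "prefix (rpref I r') (rpref J r')" using ext r'R by (auto simp: extension_def)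
  have "(r', h'') \<notin> rejs \<tau>" using unrej M'' by blast
  moreover have "h'' \<in> set (rpref J r')" using set_mono_prefix[OF pf] h'' by blast
  ultimately have "h \<in> preceding (rpref J r') h''"
    using proposal_precedes_unrejected[OF wfJ \<tau> r'(2)] \<open>h'' \<noteq> h\<close> by simp
  then have "(r', h) \<in> rejs \<sigma>" using rejected preceding_prefix[OF pf h''] by simp
  then have ousted_r': "ousted I (props \<sigma>) r' h" by (rule feasible_rejection[OF \<sigma>])
  have "h \<in> Hos I" using feasible_props_subset[OF wf \<sigma>] rh_props by blast
  then have pfh: "prefix (hpref I h) (hpref J h)" using ext by (simp add: extension_def)
  have "r \<notin> set (hpref I h) \<or> r' \<in> preceding (hpref I h) r"
    using r'(1) preceding_prefix[OF pfh] by auto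
  then have "ousted I (props \<sigma>) r h" by (rule ousted_by_predecessor[OF ousted_r' rh_props])
  with maximal_feasible_not_ousted[OF mx rh] show False by contradiction
qed

lemma safe_match_not_ousted_in_completion:
  assumes wf: "wf_instance I" and mx: "maximal_feasible I \<sigma>" and safe: "safe I M"
    and J: "completion J I" and \<tau>: "feasible J \<tau>" and unrej: "\<forall>m\<in>M. m \<notin> rejs \<tau>"
    and rh: "(r, h) \<in> M"
  shows "\<not> ousted J (props \<tau>) r h"
proof
  assume ousted_J: "ousted J (props \<tau>) r h"
  have ext: "extension J I" using J by (simp add: completion_def)
  have tent: "tent I = tent_seq \<sigma>" and pend: "pend I = pend_seq I \<sigma>"
    using tent_eq_tent_seq[OF wf mx] pend_eq_pend_seq[OF wf mx] .
  have M: "M \<subseteq> tent_seq \<sigma>" using safe tent by (simp add: safe_def)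
  have rhT: "(r, h) \<in> tent_seq \<sigma>" using M rh by blast
  then have "(r, h) \<in> props \<sigma>" by (simp add: tent_seq_def)
  then have rR: "r \<in> Res I" and hH: "h \<in> Hos I"
    using feasible_props_subset[OF wf] mx by (auto simp: maximal_feasible_def)
  have pfh: "prefix (hpref I h) (hpref J h)" and quota: "quota J h = quota I h"
    and listJ: "set (hpref J h) = Res I"
    using J hH by (auto simp: completion_def extension_def complete_instance_def)
  define crowd where "crowd = preceding (hpref J h) r \<inter> res_at h (props \<tau>)"
  have "r \<in> set (hpref J h)" using listJ rR by simp
  then have big: "quota I h \<le> card crowd"
    using ousted_J quota by (simp add: ousted_def crowd_def)
  have relevant: "relevant M h r'" if "r' \<in> crowd" for r'
    using proposer_preceding_relevant[OF wf mx M ext \<tau> unrej rhT] that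
    by (auto simp: crowd_def res_at_def)
  have "endangered I M (r, h)"
  proof (cases "r \<in> set (hpref I h)")
    case True
    then have "crowd \<subseteq> {r' \<in> preceding (hpref I h) r. relevant M h r'}"
      using relevant preceding_prefix[OF pfh True] by (auto simp: crowd_def)
    then have "quota I h \<le> card {r' \<in> preceding (hpref I h) r. relevant M h r'}"
      by (intro le_trans[OF big card_mono]) auto
    moreover have "(r, h) \<notin> pend I" using pend True by (simp add: pend_seq_def)
    ultimately show ?thesis using rh rhT tent by (simp add: endangered_def)
  next
    case False
    have "relevant M h r" using rh by (simp add: relevant_def)
    moreover have "crowd \<subseteq> Res I" using preceding_subset[of "hpref J h" r] listJ by (auto simp: crowd_def)
    ultimately have "insert r crowd \<subseteq> {r' \<in> Res I. relevant M h r'}"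
      using relevant rR by blast
    then have "card (insert r crowd) \<le> card {r' \<in> Res I. relevant M h r'}"
      using wf by (intro card_mono) (auto simp: wf_instance_def)
    moreover have "card (insert r crowd) = card crowd + 1"
      by (simp add: crowd_def not_in_preceding)
    ultimately have "quota I h + 1 \<le> card {r' \<in> Res I. relevant M h r'}" using big by linarith
    moreover have "(r, h) \<in> pend I" using pend False rhT by (simp add: pend_seq_def)
    ultimately show ?thesis using rh by (simp add: endangered_def)
  qed
  with safe rh show False by (auto simp: safe_def)
qed

lemma safe_matches_not_rejected_in_completion:
  assumes wf: "wf_instance I" and safe: "safe I M" and J: "completion J I" and "feasible J \<tau>"
  shows "M \<inter> rejs \<tau> = {}"
  using assms(4)
proof (induction rule: feasible.induct)
  case feasible_Nil
  then show ?case by (simp add: rejs_def)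
next
  case (feasible_Propose \<tau> r h)
  then show ?case by simp
next
  case (feasible_Reject \<tau> r h)
  obtain \<sigma> where "maximal_feasible I \<sigma>" using maximal_feasible_exists[OF wf] by blast
  then have "(r, h) \<notin> M"
    using safe_match_not_ousted_in_completion[OF wf _ safe J feasible_Reject.hyps(1)]
      feasible_Reject.IH feasible_Reject.hyps(2) by blast
  then show ?case using feasible_Reject.IH by simp
qed

theorem proposition8:
  fixes I :: "('r, 'h) hr_instance" and M :: "('r \<times> 'h) set"
  assumes "wf_instance I"
    and "M \<subseteq> tent I"
    and "safe I M"
  shows "\<forall>m\<in>M. finalizable I m"
proof
  fix m assume m: "m \<in> M"
  obtain \<sigma> where \<sigma>: "maximal_feasible I \<sigma>" using maximal_feasible_exists[OF assms(1)] by blast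
  have "m \<in> tent J" if J: "completion J I" for J
  proof -
    have ext: "extension J I" and wfJ: "wf_instance J"
      using J by (auto simp: completion_def extension_def)
    obtain \<rho> where \<rho>: "maximal_feasible J \<rho>" using maximal_feasible_exists[OF wfJ] by blast
    have "feasible J \<sigma>"
      using feasible_extension[OF ext assms(1)] \<sigma> by (simp add: maximal_feasible_def)
    then have "props \<sigma> \<subseteq> props \<rho>" by (rule props_mono[OF feasible_subset_maximal[OF wfJ _ \<rho>]])
    moreover have "m \<in> props \<sigma>" using m assms(2) tent_eq_tent_seq[OF assms(1) \<sigma>] by (auto simp: tent_seq_def)
    moreover have "m \<notin> rejs \<rho>"
      using safe_matches_not_rejected_in_completion[OF assms(1,3) J] \<rho> m
      by (auto simp: maximal_feasible_def)
    ultimately show ?thesis using tent_eq_tent_seq[OF wfJ \<rho>] by (auto simp: tent_seq_def)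
  qed
  then show "finalizable I m" using m assms(2) by (auto simp: finalizable_def)
qed

end
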